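(* Let $(X_m)_{m\in\mathbb Z}$ be a homogeneous second order recurrence sequence with constant coefficients. Then for all integers $a,b,c,d,e,m$, $$(X_{d-a}X_{e-b}-X_{e-a}X_{d-b})X_{m-c}=(X_{d-c}X_{e-b}-X_{e-c}X_{d-b})X_{m-a}+(X_{d-a}X_{e-c}-X_{e-a}X_{d-c})X_{m-b}.$$
   Context: A homogeneous second order recurrence sequence with constant coefficients is a sequence $(X_m)_{m\in\mathbb Z}$ of complex numbers for which there are constants $p,q\in\mathbb C$, $q\neq 0$, with $X_m=pX_{m-1}+qX_{m-2}$ for all $m\in\mathbb Z$. *)

theory Defs
  imports Complex_Main
begin

definition hom_second_order_rec :: "(int \<Rightarrow> complex) \<Rightarrow> bool" where
  "hom_second_order_rec X \<longleftrightarrow>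
     (\<exists>p q :: complex. q \<noteq> 0 \<and> (\<forall>m::int. X m = p * X (m - 1) + q * X (m - 2)))"

end

theory Submission
  imports Defs
begin

text \<open>The recurrence can be run in both directions because \<open>q \<noteq> 0\<close>, so each shift of \<open>X\<close> is
  a fixed linear combination of \<open>X k\<close> and \<open>X (k - 1)\<close>. Hence the three columns
  \<open>s \<mapsto> X (t - s)\<close> for \<open>t = d, e, m\<close> lie in a two-dimensional space, and the identity is the
  expansion of a vanishing \<open>3 \<times> 3\<close> determinant.\<close>

lemma hom_second_order_rec_shift:
  fixes X :: "int \<Rightarrow> complex"
  assumes "hom_second_order_rec X"
  shows "\<exists>A B. \<forall>k. X (k + n) = A * X k + B * X (k - 1)"
proof -
  obtain p q where q: "q \<noteq> 0" and rec: "\<And>m. X m = p * X (m - 1) + q * X (m - 2)"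
    using assms unfolding hom_second_order_rec_def by blast
  show ?thesis
  proof (induction n rule: int_induct[where k = 0])
    case base
    show ?case by (rule exI[of _ 1], rule exI[of _ 0]) simp
  next
    case (step1 i)
    then obtain A B where IH: "\<And>k. X (k + i) = A * X k + B * X (k - 1)" by blast
    have "X (k + (i + 1)) = (A * p + B) * X k + (A * q) * X (k - 1)" for k
    proof -
      have "X (k + (i + 1)) = A * X (k + 1) + B * X k"
        using IH[of "k + 1"] by (simp add: algebra_simps)
      also have "X (k + 1) = p * X k + q * X (k - 1)"
        using rec[of "k + 1"] by simp
      finally show ?thesis by (simp add: algebra_simps)
    qed
    then show ?case by blast
  next
    case (step2 i)
    then obtain A B where IH: "\<And>k. X (k + i) = A * X k + B * X (k - 1)" by blast
    have "X (k + (i - 1)) = (B / q) * X k + (A - B * p / q) * X (k - 1)" for k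
    proof -
      have "X (k + (i - 1)) = A * X (k - 1) + B * X (k - 2)"
        using IH[of "k - 1"] by (simp add: algebra_simps)
      also have "X (k - 2) = (X k - p * X (k - 1)) / q"
        using rec[of k] q by (simp add: field_simps)
      finally show ?thesis using q by (simp add: field_simps)
    qed
    then show ?case by blast
  qed
qed

lemma rank_two_columns_identity:
  fixes f g h u v :: "'i \<Rightarrow> 'a :: comm_ring"
  assumes "\<And>s. f s = A1 * u s + B1 * v s"
    and "\<And>s. g s = A2 * u s + B2 * v s"
    and "\<And>s. h s = A3 * u s + B3 * v s"
  shows "(f a * g b - g a * f b) * h c =
         (f c * g b - g c * f b) * h a + (f a * g c - g a * f c) * h b"
  by (simp only: assms) (simp add: algebra_simps)

theorem lemma2:
  fixes X :: "int \<Rightarrow> complex" and a b c d e m :: int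
  assumes "hom_second_order_rec X"
  shows "(X (d - a) * X (e - b) - X (e - a) * X (d - b)) * X (m - c) =
         (X (d - c) * X (e - b) - X (e - c) * X (d - b)) * X (m - a) +
         (X (d - a) * X (e - c) - X (e - a) * X (d - c)) * X (m - b)"
proof -
  have column: "\<exists>A B. \<forall>s. X (t - s) = A * X (- s) + B * X (- s - 1)" for t
    using hom_second_order_rec_shift[OF assms, of t] by (metis uminus_add_conv_diff)
  obtain A1 B1 where "\<And>s. X (d - s) = A1 * X (- s) + B1 * X (- s - 1)"
    using column by blast
  moreover obtain A2 B2 where "\<And>s. X (e - s) = A2 * X (- s) + B2 * X (- s - 1)"
    using column by blast
  moreover obtain A3 B3 where "\<And>s. X (m - s) = A3 * X (- s) + B3 * X (- s - 1)"
    using column by blast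
  ultimately show ?thesis
    by (rule rank_two_columns_identity[where f = "\<lambda>s. X (d - s)" and g = "\<lambda>s. X (e - s)"
          and h = "\<lambda>s. X (m - s)", simplified])
qed

end
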